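(* Let $p\in(0,1)$ and let $B\ge 1$ be an integer. For $q\in(0,1]$ define $r_B(q)$ by: if $B=1$, $r_1(q)=\frac{p}{p+q-pq}$; if $B>1$ and $q\neq p$, $$r_B(q)=\frac{\frac{p}{q}\Big(1-\big(\frac{p(1-q)}{q(1-p)}\big)^B\Big)}{1-\frac{p}{q}\big(\frac{p(1-q)}{q(1-p)}\big)^B},$$ and if $B>1$ and $q=p$, $r_B(p)=\frac{B}{B+1-p}$. Let $f_B(q)=q\,r_B(q)$ for $q\in(0,1]$ and $f_B(0)=0$. Then $f_B$ is an increasing function of $q$ on $[0,1]$.
   Context: Interpretation: $r_B(q)$ is the stationary probability that the battery (of capacity $B$ energy units) of a transmitter is nonempty, when one unit of energy arrives per slot with probability $p$ (i.i.d. Bernoulli) and, whenever the battery is nonempty, one unit is spent for a transmission with probability $q$. Then $f_B(q)$ is the probability that the transmitter transmits in a given slot. *)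

theory Defs
  imports Complex_Main
begin

text \<open>Stationary probability that the battery (capacity B) is nonempty,
  energy arrival probability p, transmission probability q (for q in (0,1]).\<close>
definition r_B :: "real \<Rightarrow> nat \<Rightarrow> real \<Rightarrow> real" where
  "r_B p B q =
     (if B = 1 then p / (p + q - p * q)
      else if q \<noteq> p then
        (p / q * (1 - (p * (1 - q) / (q * (1 - p))) ^ B)) /
        (1 - p / q * (p * (1 - q) / (q * (1 - p))) ^ B)
      else real B / (real B + 1 - p))"

definition f_B :: "real \<Rightarrow> nat \<Rightarrow> real \<Rightarrow> real" where
  "f_B p B q = (if q = 0 then 0 else q * r_B p B q)"

end

theory Submission
  imports Defs
begin

text \<open>Substitute \<open>y = p(1 - q) / (q(1 - p))\<close>, which decreases strictly as \<open>q\<close> runs over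
  \<open>(0, 1]\<close>, and let \<open>Q(y) = 1 + y + \<dots> + y^(B-1)\<close>. Since \<open>1 - y^B = (1 - y) Q(y)\<close>, all
  three cases of the definition of \<open>r_B\<close> collapse to \<open>1 / f_B(q) = 1 + (1 - p)/p (y + 1/Q(y))\<close>.
  So it suffices that \<open>y + 1/Q(y)\<close> is strictly increasing for \<open>y \<ge> 0\<close>, i.e. that
  \<open>Q(a) - Q(b) < (a - b) Q(a) Q(b)\<close> for \<open>0 \<le> b < a\<close>; this follows by induction on the
  degree from \<open>Q_(n+1)(y) = 1 + y Q_n(y)\<close>.\<close>

lemma sum_power_lessThan_Suc_eq:
  fixes y :: "'a::comm_semiring_1"
  shows "(\<Sum>k<Suc n. y ^ k) = 1 + y * (\<Sum>k<n. y ^ k)"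
  by (simp add: sum.lessThan_Suc_shift sum_distrib_left del: sum.lessThan_Suc)

lemma sum_power_ge_one:
  fixes y :: "'a::linordered_semidom"
  assumes "0 \<le> y" and "n \<ge> 1"
  shows "1 \<le> (\<Sum>k<n. y ^ k)"
proof -
  have "y ^ 0 \<le> (\<Sum>k<n. y ^ k)"
    using assms by (intro member_le_sum) auto
  then show ?thesis by simp
qed

lemma sum_power_diff_less:
  fixes a b :: real
  assumes "0 \<le> b" and "b < a" and "n \<ge> 1"
  shows "(\<Sum>k<n. a ^ k) - (\<Sum>k<n. b ^ k) < (a - b) * (\<Sum>k<n. a ^ k) * (\<Sum>k<n. b ^ k)"
  using assms(3)
proof (induction n rule: nat_induct_at_least)
  case base
  then show ?case using assms by simp
next
  case (Suc n)
  define A where "A m = (\<Sum>k<m. a ^ k)" for m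
  define B where "B m = (\<Sum>k<m. b ^ k)" for m
  have A_Suc: "A (Suc n) = 1 + a * A n" and B_Suc: "B (Suc n) = 1 + b * B n"
    unfolding A_def B_def by (rule sum_power_lessThan_Suc_eq)+
  have "A n < A (Suc n)"
    using assms by (simp add: A_def)
  moreover have "0 < (a - b) * B (Suc n)"
    using assms sum_power_ge_one[of b "Suc n"] by (simp add: B_def)
  ultimately have A_grows: "A n * ((a - b) * B (Suc n)) < A (Suc n) * ((a - b) * B (Suc n))"
    by (rule mult_strict_right_mono)
  have "A (Suc n) - B (Suc n) = (a - b) * A n + b * (A n - B n)"
    by (simp add: A_Suc B_Suc algebra_simps)
  also have "\<dots> \<le> (a - b) * A n + b * ((a - b) * A n * B n)"
    using Suc.IH assms by (intro add_left_mono mult_left_mono) (auto simp: A_def B_def)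
  also have "\<dots> = A n * ((a - b) * B (Suc n))"
    by (simp add: B_Suc algebra_simps)
  also have "\<dots> < (a - b) * A (Suc n) * B (Suc n)"
    using A_grows by (simp only: ac_simps)
  finally show ?case by (simp add: A_def B_def)
qed

lemma strict_mono_on_add_inverse_sum_power:
  assumes "n \<ge> 1"
  shows "strict_mono_on {0..} (\<lambda>y::real. y + 1 / (\<Sum>k<n. y ^ k))"
proof (rule strict_mono_onI)
  fix b a :: real
  assume "b \<in> {0..}" and "a \<in> {0..}" and "b < a"
  define A where "A = (\<Sum>k<n. a ^ k)"
  define B where "B = (\<Sum>k<n. b ^ k)"
  have "1 \<le> A" and "1 \<le> B"
    using \<open>b \<in> {0..}\<close> \<open>a \<in> {0..}\<close> assms sum_power_ge_one by (auto simp: A_def B_def)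
  have "A - B < (a - b) * A * B"
    using \<open>b \<in> {0..}\<close> \<open>b < a\<close> assms sum_power_diff_less by (simp add: A_def B_def)
  then have "1 / B - 1 / A < a - b"
    using \<open>1 \<le> A\<close> \<open>1 \<le> B\<close> by (simp add: field_simps)
  then show "b + 1 / B < a + 1 / A" by simp
qed

lemma f_B_eq_rational:
  assumes p: "0 < p" "p < 1" and "B \<ge> 1" and q: "0 < q" "q \<le> 1"
  defines "y \<equiv> p * (1 - q) / (q * (1 - p))"
  defines "Q \<equiv> \<Sum>k<B. y ^ k"
  shows "f_B p B q = p * q * Q / (p * Q + q * (1 - p))"
proof -
  have yq: "q * (1 - p) * y = p * (1 - q)"
    using p q by (simp add: y_def)
  consider "B = 1" | "B \<noteq> 1" "q = p" | "B \<noteq> 1" "q \<noteq> p" by blast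
  then show ?thesis
  proof cases
    case 1
    then show ?thesis
      using q by (simp add: f_B_def r_B_def Q_def algebra_simps)
  next
    case 2
    then have "Q = real B"
      using p by (simp add: Q_def y_def)
    moreover have "p * Q + q * (1 - p) = p * (real B + 1 - p)"
      using 2 by (simp add: \<open>Q = real B\<close> algebra_simps)
    ultimately show ?thesis
      using 2 p by (simp add: f_B_def r_B_def)
  next
    case 3
    have geom: "1 - y ^ B = (1 - y) * Q"
      unfolding Q_def by (rule one_diff_power_eq)
    have denom: "q - p * y ^ B = (1 - y) * (p * Q + q * (1 - p))"
    proof -
      have "q - p * y ^ B = q * (1 - p) - p * (1 - q) + p * (1 - y ^ B)"
        by (simp add: algebra_simps)
      also have "\<dots> = (1 - y) * (p * Q + q * (1 - p))"
        by (simp add: geom flip: yq) (simp add: algebra_simps)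
      finally show ?thesis .
    qed
    have "y \<noteq> 1"
      using yq 3 by (auto simp: algebra_simps)
    have "f_B p B q = q * ((p / q * (1 - y ^ B)) / (1 - p / q * y ^ B))"
      using q 3 by (simp add: f_B_def r_B_def y_def)
    also have "\<dots> = p * q * (1 - y ^ B) / (q - p * y ^ B)"
    proof -
      have "1 - p / q * y ^ B = (q - p * y ^ B) / q"
        using q by (simp add: field_simps)
      then show ?thesis using q by simp
    qed
    also have "\<dots> = p * q * Q / (p * Q + q * (1 - p))"
      using \<open>y \<noteq> 1\<close> by (simp add: geom denom)
    finally show ?thesis .
  qed
qed

lemma f_B_eq:
  assumes p: "0 < p" "p < 1" and B: "B \<ge> 1" and q: "0 < q" "q \<le> 1"
  defines "y \<equiv> p * (1 - q) / (q * (1 - p))"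
  shows "f_B p B q = 1 / (1 + (1 - p) / p * (y + 1 / (\<Sum>k<B. y ^ k)))"
proof -
  define Q where "Q = (\<Sum>k<B. y ^ k)"
  have "1 \<le> Q"
    using p q B by (simp add: Q_def y_def sum_power_ge_one)
  have "1 + (1 - p) / p * (y + 1 / Q) = (p * Q + q * (1 - p)) / (p * q * Q)"
    using p q \<open>1 \<le> Q\<close> by (simp add: y_def field_simps)
  then show ?thesis
    using f_B_eq_rational[OF assms(1-5)] by (simp add: Q_def y_def)
qed

lemma energy_ratio_strict_antimono:
  fixes p q1 q2 :: real
  assumes "0 < p" and "p < 1" and "0 < q1" and "q1 < q2"
  shows "p * (1 - q2) / (q2 * (1 - p)) < p * (1 - q1) / (q1 * (1 - p))"
proof -
  have "(1 - q2) / q2 < (1 - q1) / q1"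
    using assms by (simp add: field_simps)
  then have "p / (1 - p) * ((1 - q2) / q2) < p / (1 - p) * ((1 - q1) / q1)"
    using assms by (intro mult_strict_left_mono) auto
  then show ?thesis
    by (simp add: field_simps)
qed

theorem lemma1:
  fixes p :: real and B :: nat
  assumes "0 < p" and "p < 1" and "B \<ge> 1"
  shows "strict_mono_on {0..1} (f_B p B)"
proof (rule strict_mono_onI)
  fix q1 q2 :: real
  assume q1: "q1 \<in> {0..1}" and q2: "q2 \<in> {0..1}" and "q1 < q2"
  define y where "y q = p * (1 - q) / (q * (1 - p))" for q
  define g where "g z = 1 + (1 - p) / p * (z + 1 / (\<Sum>k<B. z ^ k))" for z
  have f_eq: "f_B p B q = 1 / g (y q)" if "0 < q" "q \<le> 1" for q
    using f_B_eq[OF assms that] by (simp add: g_def y_def)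
  have g_pos: "0 < g z" if "0 \<le> z" for z
    using that assms sum_power_ge_one[of z B] by (simp add: g_def add_pos_nonneg)
  have "0 < q2" and "0 \<le> y q2"
    using q1 q2 \<open>q1 < q2\<close> assms by (auto simp: y_def)
  show "f_B p B q1 < f_B p B q2"
  proof (cases "q1 = 0")
    case True
    then show ?thesis
      using f_eq[of q2] g_pos[of "y q2"] \<open>0 < q2\<close> \<open>0 \<le> y q2\<close> q2 by (simp add: f_B_def)
  next
    case False
    then have "0 < q1" using q1 by simp
    then have "y q2 < y q1"
      using energy_ratio_strict_antimono assms \<open>q1 < q2\<close> by (simp add: y_def)
    then have "y q2 + 1 / (\<Sum>k<B. y q2 ^ k) < y q1 + 1 / (\<Sum>k<B. y q1 ^ k)"
      using strict_mono_onD[OF strict_mono_on_add_inverse_sum_power[OF assms(3)]] \<open>0 \<le> y q2\<close>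
      by simp
    then have "g (y q2) < g (y q1)"
      using assms unfolding g_def by (intro add_strict_left_mono mult_strict_left_mono) auto
    then have "1 / g (y q1) < 1 / g (y q2)"
      using g_pos[OF \<open>0 \<le> y q2\<close>] by (intro divide_strict_left_mono) auto
    then show ?thesis
      using f_eq[of q1] f_eq[of q2] \<open>0 < q1\<close> \<open>0 < q2\<close> q1 q2 by simp
  qed
qed

end
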